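(* For any NSP expressions $d$ and $e_i$ ($i\in\mathbb{N}$), $\langle\!\langle \mathtt{case}\ d\ \mathtt{of}\ (i\Rightarrow e_i)\rangle\!\rangle = d[i\mapsto e_i]$.
   Context: NSP terms are the possibly infinite syntax trees generated coinductively by: procedures $p::=\lambda x_0\cdots x_{r-1}.e$; expressions $d,e::=\bot\mid n\ (n\in\mathbb{N})\mid \mathtt{case}\ a\ \mathtt{of}\ (i\Rightarrow e_i\mid i\in\mathbb{N})$; applications $a::=x\,q_0\cdots q_{r-1}$ (modulo $\alpha$-equivalence). Meta-terms additionally allow ground forms $P\vec Q$ and $\mathtt{case}\ G\ \mathtt{of}(\ldots)$ with $G$ an arbitrary ground meta-term (including an expression); they reduce by the $\beta$-rule $(\lambda\vec x.E)\vec Q\rightsquigarrow E[\vec x\mapsto\vec Q]$, $\mathtt{case}\ \bot\ \mathtt{of}(\ldots)\rightsquigarrow\bot$, $\mathtt{case}\ n\ \mathtt{of}\ (i\Rightarrow E_i)\rightsquigarrow E_n$, $\mathtt{case}\ (\mathtt{case}\ G\ \mathtt{of}\ (i\Rightarrow E_i))\ \mathtt{of}\ (j\Rightarrow F_j)\rightsquigarrow \mathtt{case}\ G\ \mathtt{of}\ (i\Rightarrow\mathtt{case}\ E_i\ \mathtt{of}\ (j\Rightarrow F_j))$, applied in head position and recursively under $\lambda$, in arguments of $x\vec Q$ and in branches of $\mathtt{case}\ x\vec Q\ \mathtt{of}(\ldots)$; $\langle\!\langle T\rangle\!\rangle$ is the supremum (syntactic order, $\bot$ least) of the finite terms lying below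 some reduct of $T$. The rightward numeral leaves of a term are defined inductively: $n$ is one in itself; those of $e$ are ones of $\lambda\vec x.e$; those of each $e_i$ are ones of $\mathtt{case}\ a\ \mathtt{of}\ (i\Rightarrow e_i)$. For a term $t$ and expressions $e_i$, $t[i\mapsto e_i]$ denotes the result of replacing each rightward numeral leaf occurrence $i$ in $t$ by $e_i$. *)

theory Defs
  imports Main
begin

text \<open>Variables are de Bruijn indices (so terms are identified modulo alpha).
  A procedure \<open>MLam r E\<close> binds r variables x_0 .. x_{r-1}; inside E the
  variable x_j is index j, and a variable referring to an enclosing binder
  is shifted by r.  Ground meta-terms: bottom, numerals, case, applications
  \<open>x Q_0 .. Q_{r-1}\<close> with variable head, and meta-applications \<open>P Q\<close>.\<close>

codatatype mproc = MLam nat mexp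
  and mexp = MBot | MNum nat | MCase mexp "nat \<Rightarrow> mexp"
           | MVApp nat "mproc list" | MApp mproc "mproc list"

coinductive nsp_p :: "mproc \<Rightarrow> bool" and nsp_e :: "mexp \<Rightarrow> bool" where
  "nsp_e E \<Longrightarrow> nsp_p (MLam r E)"
| "nsp_e MBot"
| "nsp_e (MNum n)"
| "(\<forall>q\<in>set qs. nsp_p q) \<Longrightarrow> (\<forall>i. nsp_e (es i)) \<Longrightarrow> nsp_e (MCase (MVApp x qs) es)"

inductive fin_p :: "mproc \<Rightarrow> bool" and fin_e :: "mexp \<Rightarrow> bool" where
  "fin_e E \<Longrightarrow> fin_p (MLam r E)"
| "fin_e MBot"
| "fin_e (MNum n)"
| "(\<forall>q\<in>set qs. fin_p q) \<Longrightarrow> (\<forall>i. fin_e (es i)) \<Longrightarrow> finite {i. es i \<noteq> MBot}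
    \<Longrightarrow> fin_e (MCase (MVApp x qs) es)"

coinductive le_p :: "mproc \<Rightarrow> mproc \<Rightarrow> bool" and le_e :: "mexp \<Rightarrow> mexp \<Rightarrow> bool" where
  "le_e E E' \<Longrightarrow> le_p (MLam r E) (MLam r E')"
| "le_e MBot X"
| "le_e (MNum n) (MNum n)"
| "le_e G G' \<Longrightarrow> (\<forall>i. le_e (es i) (es' i)) \<Longrightarrow> le_e (MCase G es) (MCase G' es')"
| "list_all2 le_p qs qs' \<Longrightarrow> le_e (MVApp x qs) (MVApp x qs')"
| "le_p P P' \<Longrightarrow> list_all2 le_p qs qs' \<Longrightarrow> le_e (MApp P qs) (MApp P' qs')"

primcorec lift_p :: "nat \<Rightarrow> nat \<Rightarrow> mproc \<Rightarrow> mproc"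
  and lift_e :: "nat \<Rightarrow> nat \<Rightarrow> mexp \<Rightarrow> mexp" where
  "lift_p c s P = (case P of MLam r E \<Rightarrow> MLam r (lift_e (c + r) s E))"
| "lift_e c s E = (case E of
      MBot \<Rightarrow> MBot
    | MNum n \<Rightarrow> MNum n
    | MCase G es \<Rightarrow> MCase (lift_e c s G) (\<lambda>i. lift_e c s (es i))
    | MVApp x qs \<Rightarrow> MVApp (if x < c then x else x + s) (map (lift_p c s) qs)
    | MApp P qs \<Rightarrow> MApp (lift_p c s P) (map (lift_p c s) qs))"

text \<open>\<open>sub_e k Qs E\<close>: the body E of a binder \<open>\<lambda>x_0..x_{r-1}\<close> (r = length Qs),
  at local depth k (number of variables bound inside E so far), with
  \<open>x_j \<mapsto> Qs!j\<close>.\<close>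

primcorec sub_p :: "nat \<Rightarrow> mproc list \<Rightarrow> mproc \<Rightarrow> mproc"
  and sub_e :: "nat \<Rightarrow> mproc list \<Rightarrow> mexp \<Rightarrow> mexp" where
  "sub_p k Qs P = (case P of MLam r E \<Rightarrow> MLam r (sub_e (k + r) Qs E))"
| "sub_e k Qs E = (case E of
      MBot \<Rightarrow> MBot
    | MNum n \<Rightarrow> MNum n
    | MCase G es \<Rightarrow> MCase (sub_e k Qs G) (\<lambda>i. sub_e k Qs (es i))
    | MVApp x qs \<Rightarrow>
        (if x < k then MVApp x (map (sub_p k Qs) qs)
         else if x < k + length Qs then MApp (lift_p 0 k (Qs ! (x - k))) (map (sub_p k Qs) qs)
         else MVApp (x - length Qs) (map (sub_p k Qs) qs))
    | MApp P qs \<Rightarrow> MApp (sub_p k Qs P) (map (sub_p k Qs) qs))"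

inductive hstep :: "mexp \<Rightarrow> mexp \<Rightarrow> bool" where
  beta: "length Qs = r \<Longrightarrow> hstep (MApp (MLam r E) Qs) (sub_e 0 Qs E)"
| case_bot: "hstep (MCase MBot es) MBot"
| case_num: "hstep (MCase (MNum n) es) (es n)"
| case_case: "hstep (MCase (MCase G es) fs) (MCase G (\<lambda>i. MCase (es i) fs))"
| case_cong: "hstep G G' \<Longrightarrow> hstep (MCase G es) (MCase G' es)"

inductive step_p :: "mproc \<Rightarrow> mproc \<Rightarrow> bool" and step_e :: "mexp \<Rightarrow> mexp \<Rightarrow> bool" where
  "step_e E E' \<Longrightarrow> step_p (MLam r E) (MLam r E')"
| "hstep G G' \<Longrightarrow> step_e G G'"
| "j < length qs \<Longrightarrow> step_p (qs ! j) q' \<Longrightarrow> step_e (MVApp x qs) (MVApp x (qs[j := q']))"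
| "step_e (MVApp x qs) a' \<Longrightarrow> step_e (MCase (MVApp x qs) es) (MCase a' es)"
| "step_e (es i) E' \<Longrightarrow> step_e (MCase (MVApp x qs) es) (MCase (MVApp x qs) (es(i := E')))"

subsection \<open>Evaluation \<open>\<langle>\<langle>T\<rangle>\<rangle>\<close> of a ground meta-term\<close>

definition approxs :: "mexp \<Rightarrow> mexp set" where
  "approxs T = {t. fin_e t \<and> (\<exists>T'. step_e\<^sup>*\<^sup>* T T' \<and> le_e t T')}"

definition nsp_eval :: "mexp \<Rightarrow> mexp" where
  "nsp_eval T = (THE U. nsp_e U \<and> (\<forall>t\<in>approxs T. le_e t U)
      \<and> (\<forall>U'. nsp_e U' \<longrightarrow> (\<forall>t\<in>approxs T. le_e t U') \<longrightarrow> le_e U U'))"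

subsection \<open>Replacement of rightward numeral leaves in an expression\<close>

primcorec rsub :: "mexp \<Rightarrow> (nat \<Rightarrow> mexp) \<Rightarrow> mexp" where
  "rsub d es = (case d of
      MBot \<Rightarrow> MBot
    | MNum n \<Rightarrow> (case es n of
          MBot \<Rightarrow> MBot
        | MNum m \<Rightarrow> MNum m
        | MCase G fs \<Rightarrow> MCase G fs
        | MVApp x qs \<Rightarrow> MVApp x qs
        | MApp P qs \<Rightarrow> MApp P qs)
    | MCase G fs \<Rightarrow> MCase G (\<lambda>i. rsub (fs i) es)
    | MVApp x qs \<Rightarrow> MVApp x qs
    | MApp P qs \<Rightarrow> MApp P qs)"

end

theory Submission
  imports Defs
begin

text \<open>NSP expressions are normal forms, so reducing \<open>case d of es\<close> only ever pushes the
  case construct through the case tree of \<open>d\<close> (case-of-case) and selects branches of \<open>es\<close>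
  at the numeral leaves (case-of-numeral).  Hence every reduct is a partially evaluated
  copy of \<open>d[i \<mapsto> e\<^sub>i]\<close>, and every finite term below a reduct is below \<open>d[i \<mapsto> e\<^sub>i]\<close>.
  Conversely a finite approximant of \<open>d[i \<mapsto> e\<^sub>i]\<close> has only finitely many non-bottom
  branches, so finitely many reduction steps expose it.  Since an NSP term is the
  supremum of its finite approximants, \<open>d[i \<mapsto> e\<^sub>i]\<close> is the value of \<open>case d of es\<close>.\<close>

section \<open>Syntactic order and finite approximants\<close>

lemma le_e_antisym:
  assumes "le_e a b" "le_e b a"
  shows "a = b"
proof -
  have "(le_p p q \<and> le_p q p \<longrightarrow> p = q) \<and> (le_e a b \<and> le_e b a \<longrightarrow> a = b)" for p q
    apply (rule mproc_mexp.coinduct[where ?R1.0 = "\<lambda>p q. le_p p q \<and> le_p q p"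
                                     and ?R2.0 = "\<lambda>a b. le_e a b \<and> le_e b a"])
    subgoal by (auto elim!: le_p.cases)
    subgoal
      by (elim conjE, erule le_e.cases; erule le_e.cases)
         (auto simp: rel_fun_def list_all2_conv_all_nth)
    done
  then show ?thesis using assms by blast
qed

lemma le_e_MNumD: "le_e (MNum n) b \<Longrightarrow> b = MNum n"
  by (cases rule: le_e.cases) auto

lemma le_e_MCaseE:
  assumes "le_e t (MCase e fs)"
  obtains "t = MBot"
  | G ts where "t = MCase G ts" "le_e G e" "\<forall>i. le_e (ts i) (fs i)"
  using assms by (cases rule: le_e.cases) auto

definition approx_le_p :: "mproc \<Rightarrow> mproc \<Rightarrow> bool" where
  "approx_le_p p q \<longleftrightarrow> (\<forall>t. fin_p t \<longrightarrow> le_p t p \<longrightarrow> le_p t q)"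

definition approx_le_e :: "mexp \<Rightarrow> mexp \<Rightarrow> bool" where
  "approx_le_e a b \<longleftrightarrow> (\<forall>t. fin_e t \<longrightarrow> le_e t a \<longrightarrow> le_e t b)"

lemma approx_le_p_MLam:
  assumes "approx_le_p (MLam r E) q"
  obtains E' where "q = MLam r E'" "approx_le_e E E'"
proof -
  have "le_p (MLam r MBot) q"
    using assms by (simp add: approx_le_p_def fin_p_fin_e.intros le_p_le_e.intros)
  then obtain E' where q: "q = MLam r E'" by (auto elim: le_p.cases)
  have "approx_le_e E E'"
    unfolding approx_le_e_def
  proof (intro allI impI)
    fix t assume "fin_e t" "le_e t E"
    then have "le_p (MLam r t) q"
      using assms by (simp add: approx_le_p_def fin_p_fin_e.intros le_p_le_e.intros)
    then show "le_e t E'" using q by (auto elim: le_p.cases)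
  qed
  with q show thesis by (rule that)
qed

lemma approx_le_e_MNum: "approx_le_e (MNum n) b \<Longrightarrow> b = MNum n"
  by (simp add: approx_le_e_def le_e_MNumD fin_p_fin_e.intros le_p_le_e.intros)

definition lam_bot :: "mproc \<Rightarrow> mproc" where
  "lam_bot q = MLam (un_MLam1 q) MBot"

lemma fin_p_lam_bot: "fin_p (lam_bot q)"
  by (simp add: lam_bot_def fin_p_fin_e.intros)

lemma le_p_lam_bot: "le_p (lam_bot q) q"
  by (cases q) (simp add: lam_bot_def le_p_le_e.intros)

lemma approx_le_e_MCase_probe:
  assumes "approx_le_e (MCase (MVApp x qs) gs) b"
    and "\<forall>p\<in>set ps. fin_p p" "list_all2 le_p ps qs"
    and "\<forall>i. fin_e (ts i) \<and> le_e (ts i) (gs i)" "finite {i. ts i \<noteq> MBot}"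
  shows "\<exists>qs' gs'. b = MCase (MVApp x qs') gs' \<and> list_all2 le_p ps qs' \<and> (\<forall>i. le_e (ts i) (gs' i))"
proof -
  have "le_e (MCase (MVApp x ps) ts) b"
    using assms unfolding approx_le_e_def by (auto intro: fin_p_fin_e.intros le_p_le_e.intros)
  then show ?thesis by (cases rule: le_e.cases) (auto elim: le_e.cases)
qed

lemma approx_le_e_MCase:
  assumes "approx_le_e (MCase (MVApp x qs) gs) b"
  obtains qs' gs' where "b = MCase (MVApp x qs') gs'" "list_all2 approx_le_p qs qs'"
    "\<forall>i. approx_le_e (gs i) (gs' i)"
proof -
  note probe = approx_le_e_MCase_probe[OF assms]
  let ?m = "map lam_bot qs"
  have m: "\<forall>p\<in>set ?m. fin_p p" "list_all2 le_p ?m qs"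
    by (auto simp: fin_p_lam_bot le_p_lam_bot list_all2_conv_all_nth)
  obtain qs' gs' where b: "b = MCase (MVApp x qs') gs'" and m_qs': "list_all2 le_p ?m qs'"
    using probe[OF m, of "\<lambda>_. MBot"] by (auto intro: fin_p_fin_e.intros le_p_le_e.intros)
  have "list_all2 approx_le_p qs qs'"
    unfolding list_all2_conv_all_nth approx_le_p_def
  proof (intro conjI allI impI)
    show "length qs = length qs'" using list_all2_lengthD[OF m_qs'] by simp
    fix j t assume j: "j < length qs" and t: "fin_p t" "le_p t (qs ! j)"
    have "\<forall>p\<in>set (?m[j := t]). fin_p p"
      using m(1) t(1) set_update_subset_insert[of ?m j t] by blast
    moreover have "list_all2 le_p (?m[j := t]) qs"
      using m(2) t(2) j by (auto simp: list_all2_conv_all_nth nth_list_update)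
    ultimately have "list_all2 le_p (?m[j := t]) qs'"
      using probe[of _ "\<lambda>_. MBot"] b by (auto intro: fin_p_fin_e.intros le_p_le_e.intros)
    then show "le_p t (qs' ! j)" using j by (auto simp: list_all2_conv_all_nth)
  qed
  moreover have "\<forall>i. approx_le_e (gs i) (gs' i)"
    unfolding approx_le_e_def
  proof (intro allI impI)
    fix i t assume "fin_e t" "le_e t (gs i)"
    then have "\<forall>k. fin_e (((\<lambda>_. MBot)(i := t)) k) \<and> le_e (((\<lambda>_. MBot)(i := t)) k) (gs k)"
      by (auto intro: fin_p_fin_e.intros le_p_le_e.intros)
    moreover have "finite {k. ((\<lambda>_. MBot)(i := t)) k \<noteq> MBot}"
      by (rule finite_subset[of _ "{i}"]) auto
    ultimately have "\<forall>k. le_e (((\<lambda>_. MBot)(i := t)) k) (gs' k)"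
      using probe[OF m] b by fastforce
    then show "le_e t (gs' i)" by (metis fun_upd_same)
  qed
  ultimately show thesis using b that by blast
qed

lemma le_e_if_approx_le_e:
  assumes "nsp_e V" "approx_le_e V U"
  shows "le_e V U"
proof -
  define X1 where "X1 p q \<longleftrightarrow> nsp_p p \<and> approx_le_p p q" for p q
  \<comment> \<open>Case heads \<open>x qs\<close> are not NSP expressions, so the relation also admits them.\<close>
  define X2 where "X2 a b \<longleftrightarrow> nsp_e a \<and> approx_le_e a b
    \<or> (\<exists>x qs qs'. a = MVApp x qs \<and> b = MVApp x qs' \<and> list_all2 X1 qs qs')" for a b
  have "(\<forall>p q. X1 p q \<longrightarrow> le_p p q) \<and> (\<forall>a b. X2 a b \<longrightarrow> le_e a b)"
    apply (rule le_p_le_e.coinduct)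
    subgoal for p q
      by (auto simp: X1_def X2_def elim!: nsp_p.cases approx_le_p_MLam)
    subgoal premises X2ab for a b
    proof (cases "nsp_e a \<and> approx_le_e a b")
      case True
      then have a: "nsp_e a" and ab: "approx_le_e a b" by blast+
      from a show ?thesis
      proof (cases rule: nsp_e.cases)
        case (2 n)
        then show ?thesis using approx_le_e_MNum ab by blast
      next
        case (3 qs gs x)
        moreover obtain qs' gs' where "b = MCase (MVApp x qs') gs'"
          "list_all2 approx_le_p qs qs'" "\<forall>i. approx_le_e (gs i) (gs' i)"
          using ab 3(1) approx_le_e_MCase by metis
        ultimately show ?thesis
          by (auto simp: X1_def X2_def list_all2_conv_all_nth)
      qed blast
    next
      case False
      then show ?thesis using X2ab by (auto simp: X2_def elim: list_all2_mono)
    qed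
    done
  then show ?thesis using assms by (auto simp: X2_def)
qed

lemma nsp_eval_eqI:
  assumes "nsp_e V" and approxs_T: "approxs T = {t. fin_e t \<and> le_e t V}"
  shows "nsp_eval T = V"
  unfolding nsp_eval_def
proof (rule the_equality)
  have least: "le_e V U" if "\<forall>t\<in>approxs T. le_e t U" for U
  proof (rule le_e_if_approx_le_e[OF assms(1)])
    show "approx_le_e V U" using that unfolding approx_le_e_def approxs_T by blast
  qed
  then show "nsp_e V \<and> (\<forall>t\<in>approxs T. le_e t V) \<and>
      (\<forall>U. nsp_e U \<longrightarrow> (\<forall>t\<in>approxs T. le_e t U) \<longrightarrow> le_e V U)"
    using assms(1) by (simp add: approxs_T)
  fix U
  assume U: "nsp_e U \<and> (\<forall>t\<in>approxs T. le_e t U) \<and>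
      (\<forall>U'. nsp_e U' \<longrightarrow> (\<forall>t\<in>approxs T. le_e t U') \<longrightarrow> le_e U U')"
  then have "le_e U V" using assms(1) by (simp add: approxs_T)
  moreover have "le_e V U" using U least by blast
  ultimately show "U = V" by (rule le_e_antisym)
qed

section \<open>Reduction\<close>

lemma no_step_from_nsp:
  "step_p P P' \<Longrightarrow> nsp_p P \<Longrightarrow> False"
  "step_e E E' \<Longrightarrow> nsp_e E \<or> (\<exists>x qs. E = MVApp x qs \<and> (\<forall>q\<in>set qs. nsp_p q)) \<Longrightarrow> False"
proof (induction rule: step_p_step_e.inducts)
  case (2 G G')
  then show ?case by (auto elim: hstep.cases nsp_e.cases)
qed (auto elim: nsp_p.cases nsp_e.cases)

lemma step_e_MCase_MVApp_cases:
  assumes "step_e (MCase (MVApp x qs) Fs) T'" "\<forall>q\<in>set qs. nsp_p q"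
  obtains i E' where "step_e (Fs i) E'" "T' = MCase (MVApp x qs) (Fs(i := E'))"
  using assms(1)
proof (cases rule: step_e.cases)
  case 1
  then show ?thesis by (auto elim!: hstep.cases)
next
  case 3
  then show ?thesis using assms(2) no_step_from_nsp(2) by blast
qed (use that in auto)

lemma step_e_branch_steps:
  assumes "step_e\<^sup>*\<^sup>* (Fs i) E'"
  shows "step_e\<^sup>*\<^sup>* (MCase (MVApp x qs) Fs) (MCase (MVApp x qs) (Fs(i := E')))"
  using assms
proof (induction rule: rtranclp_induct)
  case (step E E')
  have "step_e (MCase (MVApp x qs) (Fs(i := E))) (MCase (MVApp x qs) (Fs(i := E')))"
    using step.hyps(2) step_p_step_e.intros(5)[of "Fs(i := E)" i E'] by simp
  with step.IH show ?case
    by (rule rtranclp.rtrancl_into_rtrancl)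
qed simp

lemma step_e_finite_branches_steps:
  assumes "finite S" "\<forall>i\<in>S. step_e\<^sup>*\<^sup>* (Fs i) (Gs i)"
  shows "step_e\<^sup>*\<^sup>* (MCase (MVApp x qs) Fs) (MCase (MVApp x qs) (\<lambda>i. if i \<in> S then Gs i else Fs i))"
  using assms
proof (induction S rule: finite_induct)
  case (insert a S)
  let ?H = "\<lambda>i. if i \<in> S then Gs i else Fs i"
  have "step_e\<^sup>*\<^sup>* (MCase (MVApp x qs) Fs) (MCase (MVApp x qs) ?H)"
    using insert by simp
  also have "step_e\<^sup>*\<^sup>* \<dots> (MCase (MVApp x qs) (?H(a := Gs a)))"
    using insert by (intro step_e_branch_steps) simp
  also have "?H(a := Gs a) = (\<lambda>i. if i \<in> insert a S then Gs i else Fs i)"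
    by (auto simp: fun_eq_iff)
  finally show ?case .
qed simp

section \<open>Evaluation of a case distinction on an NSP expression\<close>

lemma rsub_MBot [simp]: "rsub MBot es = MBot"
  by (subst rsub.code) simp

lemma rsub_MNum [simp]: "rsub (MNum n) es = es n"
  by (subst rsub.code) (simp split: mexp.split)

lemma rsub_MCase [simp]: "rsub (MCase G fs) es = MCase G (\<lambda>i. rsub (fs i) es)"
  by (subst rsub.code) simp

lemma nsp_e_rsub:
  assumes "nsp_e d" "\<forall>i. nsp_e (es i)"
  shows "nsp_e (rsub d es)"
proof -
  have "(\<forall>p. False \<longrightarrow> nsp_p p) \<and> (\<forall>e. (\<exists>d. nsp_e d \<and> e = rsub d es) \<longrightarrow> nsp_e e)"
  proof (rule nsp_p_nsp_e.coinduct[where ?X1.0 = "\<lambda>_. False"])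
    fix e assume "\<exists>d. nsp_e d \<and> e = rsub d es"
    then obtain d where d: "nsp_e d" and e: "e = rsub d es" by blast
    from d show "e = MBot \<or> (\<exists>n. e = MNum n) \<or>
      (\<exists>qs fs x. e = MCase (MVApp x qs) fs \<and> (\<forall>q\<in>set qs. False \<or> nsp_p q) \<and>
         (\<forall>i. (\<exists>d. nsp_e d \<and> fs i = rsub d es) \<or> nsp_e (fs i)))"
    proof (cases rule: nsp_e.cases)
      case (2 n)
      have "nsp_e (es n)" using assms(2) by blast
      then show ?thesis using 2 e by (cases rule: nsp_e.cases) auto
    qed (use e in auto)
  qed simp
  then show ?thesis using assms(1) by blast
qed

text \<open>\<open>case_reduct es T V\<close>: \<open>T\<close> is a case tree over NSP heads whose leaves are
  NSP expressions or pending redexes \<open>case d of es\<close>; \<open>V\<close> is the same tree with each pending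
  redex replaced by \<open>rsub d es\<close>.  Every reduct of \<open>case d of es\<close> has this shape.\<close>

inductive case_reduct :: "(nat \<Rightarrow> mexp) \<Rightarrow> mexp \<Rightarrow> mexp \<Rightarrow> bool" for es where
  nsp: "nsp_e V \<Longrightarrow> case_reduct es V V"
| pending: "nsp_e d \<Longrightarrow> case_reduct es (MCase d es) (rsub d es)"
| branches: "\<forall>q\<in>set qs. nsp_p q \<Longrightarrow> \<forall>i. case_reduct es (Fs i) (Gs i) \<Longrightarrow>
    case_reduct es (MCase (MVApp x qs) Fs) (MCase (MVApp x qs) Gs)"

lemma case_reduct_step:
  assumes "case_reduct es T V" "step_e T T'" "\<forall>i. nsp_e (es i)"
  shows "case_reduct es T' V"
  using assms(1,2)
proof (induction arbitrary: T' rule: case_reduct.induct)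
  case (nsp V)
  then show ?case using no_step_from_nsp(2) by blast
next
  case (pending d)
  from pending.prems show ?case
  proof (cases rule: step_e.cases)
    case 1
    then show ?thesis
    proof (cases rule: hstep.cases)
      case case_bot
      then show ?thesis by (simp add: case_reduct.nsp nsp_p_nsp_e.intros)
    next
      case (case_num n)
      then show ?thesis using assms(3) by (simp add: case_reduct.nsp)
    next
      case (case_case G fs)
      with pending.hyps obtain x qs where
        "G = MVApp x qs" "\<forall>q\<in>set qs. nsp_p q" "\<forall>i. nsp_e (fs i)"
        by (cases rule: nsp_e.cases) auto
      with case_case show ?thesis by (auto intro!: case_reduct.branches case_reduct.pending)
    next
      case case_cong
      then show ?thesis using pending.hyps no_step_from_nsp(2) step_p_step_e.intros(2) by blast
    qed
  qed (use pending.hyps in \<open>auto elim: nsp_e.cases\<close>)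
next
  case (branches qs Fs Gs x)
  obtain i E' where "step_e (Fs i) E'" "T' = MCase (MVApp x qs) (Fs(i := E'))"
    using step_e_MCase_MVApp_cases[OF branches.prems branches.hyps(1)] .
  then show ?case using branches by (auto intro!: case_reduct.branches)
qed

lemma case_reduct_steps:
  "step_e\<^sup>*\<^sup>* T T' \<Longrightarrow> case_reduct es T V \<Longrightarrow> \<forall>i. nsp_e (es i) \<Longrightarrow> case_reduct es T' V"
  by (induction rule: rtranclp_induct) (auto intro: case_reduct_step)

lemma le_e_case_reduct:
  assumes "case_reduct es T V" "fin_e t" "le_e t T"
  shows "le_e t V"
  using assms
proof (induction arbitrary: t rule: case_reduct.induct)
  case (pending d)
  from pending.prems(2) show ?case
  proof (cases rule: le_e_MCaseE)
    case (2 G ts)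
    from pending.prems(1) 2(1) obtain y qs where "G = MVApp y qs" by (auto elim: fin_e.cases)
    with 2(2) obtain qs' where "d = MVApp y qs'" by (auto elim: le_e.cases)
    with pending.hyps show ?thesis by (auto elim: nsp_e.cases)
  qed (simp add: le_p_le_e.intros)
next
  case (branches qs Fs Gs x)
  from branches.prems(2) show ?case
  proof (cases rule: le_e_MCaseE)
    case (2 G ts)
    from branches.prems(1) 2(1) have "\<forall>i. fin_e (ts i)" by (auto elim: fin_e.cases)
    with 2(3) branches.IH have "\<forall>i. le_e (ts i) (Gs i)" by blast
    with 2 show ?thesis by (simp add: le_p_le_e.intros(4))
  qed (simp add: le_p_le_e.intros)
qed simp

lemma approx_rsub_reachable:
  assumes "fin_e t" "nsp_e d" "le_e t (rsub d es)"
  shows "\<exists>T'. step_e\<^sup>*\<^sup>* (MCase d es) T' \<and> le_e t T'"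
  using assms
proof (induction t arbitrary: d rule: fin_p_fin_e.inducts(2)[where ?P1.0 = "\<lambda>_. True"])
  case 2
  then show ?case by (auto intro: le_p_le_e.intros)
next
  case (3 n)
  from 3(1) show ?case
  proof (cases rule: nsp_e.cases)
    case (2 m)
    then have "step_e (MCase d es) (es m)" by (auto intro: step_p_step_e.intros hstep.intros)
    with 2 3(2) show ?thesis by auto
  qed (use 3(2) le_e_MNumD in fastforce)+
next
  case (4 ps ts y)
  from 4(4) show ?case
  proof (cases rule: nsp_e.cases)
    case 1
    with 4(5) show ?thesis by (cases rule: le_e.cases) auto
  next
    case (2 m)
    then have "step_e (MCase d es) (es m)" by (auto intro: step_p_step_e.intros hstep.intros)
    with 2 4(5) show ?thesis by auto
  next
    case (3 qs fs x)
    from 4(5) 3(1) have head: "le_e (MVApp y ps) (MVApp x qs)"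
      and branches: "\<forall>i. le_e (ts i) (rsub (fs i) es)"
      by (cases rule: le_e.cases; simp)+
    have "\<forall>i. \<exists>T. step_e\<^sup>*\<^sup>* (MCase (fs i) es) T \<and> le_e (ts i) T"
      using 4(3) 3(3) branches by blast
    then obtain Ts where Ts: "\<forall>i. step_e\<^sup>*\<^sup>* (MCase (fs i) es) (Ts i) \<and> le_e (ts i) (Ts i)"
      by metis
    \<comment> \<open>\<open>t\<close> is finite, so only finitely many branches have to be reduced.\<close>
    let ?S = "{i. ts i \<noteq> MBot}"
    let ?T' = "MCase (MVApp x qs) (\<lambda>i. if i \<in> ?S then Ts i else MCase (fs i) es)"
    have "step_e (MCase d es) (MCase (MVApp x qs) (\<lambda>i. MCase (fs i) es))"
      using 3(1) by (auto intro: step_p_step_e.intros hstep.intros)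
    also have "step_e\<^sup>*\<^sup>* \<dots> ?T'"
      using Ts 4(2) by (intro step_e_finite_branches_steps) auto
    finally have "step_e\<^sup>*\<^sup>* (MCase d es) ?T'" .
    moreover have "le_e (MCase (MVApp y ps) ts) ?T'"
      using head Ts by (auto intro!: le_p_le_e.intros(4) intro: le_p_le_e.intros(2))
    ultimately show ?thesis by blast
  qed
qed simp

theorem lemma3p4:
  assumes "nsp_e d" and "\<forall>i. nsp_e (es i)"
  shows "nsp_eval (MCase d es) = rsub d es"
proof (rule nsp_eval_eqI)
  show "nsp_e (rsub d es)" using assms by (rule nsp_e_rsub)
  show "approxs (MCase d es) = {t. fin_e t \<and> le_e t (rsub d es)}"
  proof (intro set_eqI iffI)
    fix t assume "t \<in> approxs (MCase d es)"
    then obtain T' where t: "fin_e t" "le_e t T'" and T': "step_e\<^sup>*\<^sup>* (MCase d es) T'"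
      by (auto simp: approxs_def)
    have "case_reduct es T' (rsub d es)"
      using case_reduct_steps[OF T' case_reduct.pending[OF assms(1)] assms(2)] .
    with t show "t \<in> {t. fin_e t \<and> le_e t (rsub d es)}" by (simp add: le_e_case_reduct)
  next
    fix t assume "t \<in> {t. fin_e t \<and> le_e t (rsub d es)}"
    with assms(1) show "t \<in> approxs (MCase d es)"
      by (auto simp: approxs_def dest: approx_rsub_reachable)
  qed
qed

end
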